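(* Let $n=2k$ and let $u_1,\ldots,u_k$ be pairwise distinct elements of $\mathbb{F}_{2^n}$ such that $u_iu_j^{2^k}\in\mathbb{F}_{2^k}^*$ for all $1\le i<j\le k$. Let $t$ be a positive integer, $F_1,\ldots,F_t$ reduced polynomials in $\mathbb{F}_2[X_1,\ldots,X_k]$, $f_i(x)=F_i(\mathrm{Tr}^n_1(u_1x),\ldots,\mathrm{Tr}^n_1(u_kx))$, and $\widehat H(x)=(x^{2^k+1},f_1(x),\ldots,f_t(x))$. Then for $(u,v)\in(\mathbb{F}_{2^k}\times\mathbb{F}_2^t)\setminus\{(0,0)\}$, the component $\langle(u,v),\widehat H(x)\rangle$ is bent if and only if $u\neq0$. In particular, $\widehat H$ has exactly $2^{k+t}-2^t$ bent components (the maximal number of bent components of a $(2k,k+t)$-function), and for every $v\in\mathbb{F}_2^t$ the function $\sum_{i=1}^t v_if_i$ is not bent.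
   Context: $\mathrm{Tr}^n_1(x)=\sum_{i=0}^{n-1}x^{2^i}$; $\langle(u,v),\widehat H(x)\rangle=\mathrm{Tr}^k_1(ux^{2^k+1})+\sum_{i=1}^tv_if_i(x)$. A Boolean function $f$ on $\mathbb{F}_{2^n}$ is bent if $|\sum_x(-1)^{f(x)+\mathrm{Tr}^n_1(ax)}|=2^{n/2}$ for all $a$. A reduced polynomial is a multilinear polynomial over $\mathbb{F}_2$. *)

theory Defs
  imports Complex_Main
begin

text \<open>Absolute trace Tr^m_1(x) = sum_{i<m} x^(2^i).  On F_{2^n} with m = n this is
  the absolute trace; restricted to the subfield F_{2^k} (m = k) it is Tr^k_1.\<close>
definition tr :: "nat \<Rightarrow> 'a::field \<Rightarrow> 'a" where
  "tr m x = (\<Sum>i<m. x ^ (2 ^ i))"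

definition subfield :: "nat \<Rightarrow> 'a::field set" where
  "subfield k = {x. x ^ (2 ^ k) = x}"

text \<open>A reduced (multilinear) polynomial over F_2 in X_0,...,X_{k-1} is given by its set of
  monomials, each monomial being a set of variable indices.  Evaluation at a point
  y in F_2^k (y j = True meaning 1) is the parity of the monomials evaluating to 1.\<close>
definition reduced_poly :: "nat \<Rightarrow> nat set set \<Rightarrow> bool" where
  "reduced_poly k F \<longleftrightarrow> F \<subseteq> Pow {0..<k}"

definition eval_rpoly :: "nat set set \<Rightarrow> (nat \<Rightarrow> bool) \<Rightarrow> bool" where
  "eval_rpoly F y \<longleftrightarrow> odd (card {S \<in> F. \<forall>j\<in>S. y j})"

text \<open>Boolean functions F_{2^n} -> F_2 are represented as functions into the field taking
  values in the prime field {0,1}.  Bentness via the Walsh transform.\<close>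
definition bent :: "nat \<Rightarrow> ('a::{field,finite} \<Rightarrow> 'a) \<Rightarrow> bool" where
  "bent n f \<longleftrightarrow> (\<forall>a::'a.
     \<bar>\<Sum>x\<in>UNIV. (if f x + tr n (a * x) = 0 then 1 else -1 :: real)\<bar> = 2 powr (real n / 2))"

end

(*
  For w \<noteq> 0 in F_{2^k} the quadratic part Q_w(x) = Tr^k_1(w x^{2^k+1}) satisfies
  Q_w(x + z) = Q_w(x) + Q_w(z) + Tr^n_1(w z^{2^k} x).  The Boolean part g depends only on the
  traces Tr^n_1(u_j x), so it is invariant under shifts by the common kernel D of these linear
  forms.  The hypothesis u_i u_j^{2^k} \<in> F_{2^k} puts c = u_j^{2^k} / w into D, and shifting
  Q_w + g by c adds Tr^n_1(u_j x).  Hence every derivative of Q_w + g in a direction z \<noteq> 0 is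
  complemented by some shift (by c with Tr^n_1(u_j z) = 1 if z \<notin> D, and by a suitable multiple
  of 1 / (w z^{2^k}) if z \<in> D), so all derivatives are balanced and Q_w + g is bent.  For w = 0,
  g is invariant under a nonzero shift from D, which makes one of its Walsh coefficients vanish.
  The count then follows from |F_{2^k}| = 2^k.
*)
theory Submission
  imports Defs "HOL-Computational_Algebra.Polynomial" "HOL-Library.FuncSet"
begin

definition chi :: "'a::field \<Rightarrow> real" where
  "chi y = (if y = 0 then 1 else -1)"

definition derivative :: "('a \<Rightarrow> 'a) \<Rightarrow> 'a \<Rightarrow> 'a \<Rightarrow> 'a::plus" where
  "derivative g z x = g x + g (x + z)"

definition walsh :: "nat \<Rightarrow> ('a::{field,finite} \<Rightarrow> 'a) \<Rightarrow> 'a \<Rightarrow> real" where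
  "walsh n g a = (\<Sum>x\<in>UNIV. chi (g x + tr n (a * x)))"

lemma bent_iff_walsh: "bent n g \<longleftrightarrow> (\<forall>a. \<bar>walsh n g a\<bar> = 2 powr (real n / 2))"
  by (simp add: bent_def walsh_def chi_def)

lemma square_eq_self_iff: "(y::'a::field) ^ 2 = y \<longleftrightarrow> y \<in> {0, 1}"
proof -
  have "y ^ 2 = y \<longleftrightarrow> y * (y - 1) = 0"
    by (simp add: power2_eq_square algebra_simps)
  then show ?thesis
    by simp
qed

lemma eval_rpoly_cong:
  assumes "reduced_poly k F" and "\<And>j. j < k \<Longrightarrow> y j = y' j"
  shows "eval_rpoly F y = eval_rpoly F y'"
proof -
  have "{S \<in> F. \<forall>j\<in>S. y j} = {S \<in> F. \<forall>j\<in>S. y' j}"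
    using assms by (auto simp: reduced_poly_def subset_iff)
  then show ?thesis
    by (simp add: eval_rpoly_def)
qed

lemma zero_in_subfield: "0 \<in> subfield k"
  by (simp add: subfield_def)

lemma subfield_mult: "s \<in> subfield k \<Longrightarrow> r \<in> subfield k \<Longrightarrow> s * r \<in> subfield k"
  by (simp add: subfield_def power_mult_distrib)

lemma subfield_inverse: "s \<in> subfield k \<Longrightarrow> inverse s \<in> subfield k"
  by (simp add: subfield_def power_inverse)

lemma card_subfield_le:
  assumes "0 < k"
  shows "card (subfield k :: 'a::field set) \<le> 2 ^ k"
proof -
  define p :: "'a poly" where "p = monom 1 (2 ^ k) - [:0, 1:]"
  have "(1::nat) < 2 ^ k"
    using assms one_less_power[of "2::nat" k] by simp
  then have "coeff p (2 ^ k) = 1"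
    using assms by (simp add: p_def coeff_monom coeff_pCons split: nat.split)
  then have "p \<noteq> 0"
    by auto
  then have "card {x. poly p x = 0} \<le> degree p"
    by (rule card_poly_roots_bound)
  moreover have "degree p \<le> 2 ^ k"
    unfolding p_def using \<open>1 < 2 ^ k\<close> by (intro degree_diff_le degree_monom_le) auto
  moreover have "{x. poly p x = 0} = subfield k"
    by (simp add: p_def poly_monom subfield_def)
  ultimately show ?thesis
    by simp
qed

context
  assumes char2: "(2::'a::field) = 0"
begin

lemma add_self_eq_0 [simp]: "(x::'a) + x = 0"
  using char2 by (metis mult_2 mult_zero_left)

lemma add_add_self [simp]: "(x::'a) + (x + y) = y"
  by (simp flip: add.assoc)

lemma square_add: "((x::'a) + y) ^ 2 = x ^ 2 + y ^ 2"
  using char2 by (simp add: power2_sum)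

lemma add_eq_0_iff_eq: "(x::'a) + y = 0 \<longleftrightarrow> x = y"
  by (metis add_add_self add_self_eq_0 add_0_right)

lemma frobenius_add: "((x::'a) + y) ^ 2 ^ i = x ^ 2 ^ i + y ^ 2 ^ i"
proof (induction i)
  case (Suc i)
  have "(x + y) ^ 2 ^ Suc i = ((x + y) ^ 2 ^ i) ^ 2"
    by (simp only: power_Suc2 power_mult)
  also have "\<dots> = (x ^ 2 ^ i) ^ 2 + (y ^ 2 ^ i) ^ 2"
    by (simp only: Suc square_add)
  also have "\<dots> = x ^ 2 ^ Suc i + y ^ 2 ^ Suc i"
    by (simp only: power_Suc2 power_mult)
  finally show ?case .
qed simp

lemma square_sum: "(\<Sum>i\<in>A. (a i :: 'a)) ^ 2 = (\<Sum>i\<in>A. a i ^ 2)"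
  by (induction A rule: infinite_finite_induct) (simp_all add: square_add)

lemma tr_add: "tr m ((x::'a) + y) = tr m x + tr m y"
  by (simp add: tr_def frobenius_add sum.distrib)

lemma tr_zero [simp]: "tr m (0::'a) = 0"
  by (simp add: tr_def power_0_left)

lemma tr_split: "tr (a + b) (y::'a) = tr a y + tr b (y ^ 2 ^ a)"
  by (induction b) (simp_all add: tr_def power_add power_mult add.assoc)

lemma tr_square: "tr m (y::'a) ^ 2 = tr m y + y ^ 2 ^ m + y"
proof -
  have "tr m y ^ 2 = (\<Sum>i<m. y ^ 2 ^ Suc i)"
    by (simp add: tr_def square_sum mult.commute flip: power_mult)
  then have "tr m y ^ 2 + y = tr (Suc m) y"
    by (simp only: tr_def sum.lessThan_Suc_shift) simp
  also have "\<dots> = tr m y + y ^ 2 ^ m"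
    by (simp add: tr_def)
  finally show ?thesis
    by (metis add_add_self add.commute)
qed

lemma add_in_01: "(p::'a) \<in> {0, 1} \<Longrightarrow> q \<in> {0, 1} \<Longrightarrow> p + q \<in> {0, 1}"
  by auto

lemma sum_in_01: "(\<And>i. i \<in> A \<Longrightarrow> (a i :: 'a) \<in> {0, 1}) \<Longrightarrow> (\<Sum>i\<in>A. a i) \<in> {0, 1}"
proof (induction A rule: infinite_finite_induct)
  case (insert i A)
  then show ?case
    unfolding sum.insert[OF insert(1,2)] by (intro add_in_01) auto
qed simp_all

lemma chi_add: "(p::'a) \<in> {0, 1} \<Longrightarrow> q \<in> {0, 1} \<Longrightarrow> chi (p + q) = chi p * chi q"
  by (auto simp: chi_def)

lemma chi_add_1: "(p::'a) \<in> {0, 1} \<Longrightarrow> chi (p + 1) = - chi p"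
  by (auto simp: chi_def)

lemma tr_subfield_in_01: "s \<in> subfield k \<Longrightarrow> tr k (s::'a) \<in> {0, 1}"
  using tr_square[of k s] square_eq_self_iff[of "tr k s"] by (simp add: subfield_def char2)

lemma tr_double_subfield: "s \<in> subfield k \<Longrightarrow> tr (2 * k) (s::'a) = 0"
  using tr_split[of k k s] by (simp add: subfield_def mult_2)

lemma eval_rpoly_tr_shift:
  assumes "reduced_poly k F" and "\<And>j. j < k \<Longrightarrow> tr n (u j * d) = 0"
  shows "eval_rpoly F (\<lambda>j. tr n (u j * (x + d)) = 1) = eval_rpoly F (\<lambda>j. tr n (u j * (x::'a)) = 1)"
  using assms(1) by (rule eval_rpoly_cong) (simp add: assms(2) distrib_left tr_add)

end

context
  fixes n :: nat
  assumes char2: "(2::'a::{field,finite}) = 0"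
    and card: "card (UNIV :: 'a set) = 2 ^ n"
begin

lemma card_exponent_pos: "0 < n"
proof (rule ccontr)
  assume "\<not> 0 < n"
  then have "card (UNIV :: 'a set) = 1"
    using card by simp
  moreover have "card {0::'a, 1} \<le> card (UNIV :: 'a set)"
    by (rule card_mono) auto
  ultimately show False
    by simp
qed

lemma power_card_eq_self: "(x::'a) ^ 2 ^ n = x"
proof (cases "x = 0")
  case False
  let ?U = "UNIV - {0::'a}"
  have "x ^ card ?U * \<Prod>?U = (\<Prod>y\<in>?U. x * y)"
    by (simp add: prod.distrib)
  also have "\<dots> = \<Prod>?U"
    by (rule prod.reindex_bij_witness[of _ "\<lambda>y. y / x" "\<lambda>y. x * y"]) (use False in auto)
  finally have "x ^ card ?U = 1"
    by simp
  moreover have "2 ^ n = Suc (card ?U)"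
    using card by (simp add: card_Diff_singleton)
  ultimately show ?thesis
    by simp
qed (use card_exponent_pos in simp)

lemma tr_in_01: "tr n (y::'a) \<in> {0, 1}"
  by (rule tr_subfield_in_01[OF char2]) (simp add: subfield_def power_card_eq_self)

text \<open>The trace is a nonzero polynomial of degree \<open>2 ^ (n - 1) < 2 ^ n\<close>, so it cannot vanish on
  the whole field.\<close>
lemma tr_eq_1_exists: "\<exists>x::'a. tr n x = 1"
proof (rule ccontr)
  assume no_1: "\<nexists>x::'a. tr n x = 1"
  define p :: "'a poly" where "p = (\<Sum>i<n. monom 1 (2 ^ i))"
  have coeff_p: "coeff p m = (\<Sum>i<n. if 2 ^ i = m then 1 else 0)" for m
    by (simp add: p_def coeff_sum coeff_monom)
  have "coeff p (2 ^ (n - 1)) = (\<Sum>i<n. if i = n - 1 then 1 else 0)"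
    unfolding coeff_p by (rule sum.cong) auto
  also have "\<dots> = 1"
    using card_exponent_pos by simp
  finally have "p \<noteq> 0"
    by auto
  then have "card {x. poly p x = 0} \<le> degree p"
    by (rule card_poly_roots_bound)
  also have "degree p \<le> 2 ^ (n - 1)"
  proof (rule degree_le, intro allI impI)
    fix m :: nat
    assume "2 ^ (n - 1) < m"
    moreover have "(2::nat) ^ i \<le> 2 ^ (n - 1)" if "i < n" for i
      using that by (intro power_increasing) auto
    ultimately show "coeff p m = 0"
      unfolding coeff_p by (auto intro!: sum.neutral)
  qed
  also have "\<dots> < 2 ^ n"
    using card_exponent_pos by simp
  also have "2 ^ n = card {x::'a. poly p x = 0}"
    using tr_in_01 no_1 card by (auto simp: p_def tr_def poly_sum poly_monom)
  finally show False
    by simp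
qed

lemma sum_chi_complemented:
  fixes g :: "'a \<Rightarrow> 'a"
  assumes "\<And>x. g x \<in> {0, 1}" and "\<And>x. g (x + c) = g x + 1"
  shows "(\<Sum>x\<in>UNIV. chi (g x)) = 0"
proof -
  have "(\<Sum>x\<in>UNIV. chi (g x)) = (\<Sum>x\<in>UNIV. chi (g (x + c)))"
    using sum.reindex_bij_betw[OF bij_plus_right, of "\<lambda>x. chi (g x)"] by simp
  also have "\<dots> = - (\<Sum>x\<in>UNIV. chi (g x))"
    using assms chi_add_1[OF char2] by (simp add: sum_negf)
  finally show ?thesis
    by simp
qed

lemma bent_if_derivatives_balanced:
  assumes g01: "\<And>x. g x \<in> {0, 1}"
    and balanced: "\<And>z. z \<noteq> 0 \<Longrightarrow> (\<Sum>x\<in>UNIV. chi (derivative g z x :: 'a)) = 0"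
  shows "bent n g"
  unfolding bent_iff_walsh
proof
  fix a :: 'a
  define G where "G x = g x + tr n (a * x)" for x
  have G01: "G x \<in> {0, 1}" for x
    unfolding G_def by (rule add_in_01[OF char2 g01 tr_in_01])
  have chi_G: "chi (G x) * chi (G (x + z)) = chi (tr n (a * z)) * chi (g x + g (x + z))" for x z
  proof -
    have "chi (G x) * chi (G (x + z)) = chi (G x + G (x + z))"
      by (rule chi_add[OF char2 G01 G01, symmetric])
    also have "G x + G (x + z) = tr n (a * z) + (g x + g (x + z))"
      by (simp add: G_def distrib_left tr_add[OF char2] add_ac add_add_self[OF char2])
    also have "chi \<dots> = chi (tr n (a * z)) * chi (g x + g (x + z))"
      by (rule chi_add[OF char2 tr_in_01 add_in_01[OF char2 g01 g01]])
    finally show ?thesis .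
  qed
  have "walsh n g a ^ 2 = (\<Sum>x\<in>UNIV. \<Sum>y\<in>UNIV. chi (G x) * chi (G y))"
    by (simp add: walsh_def G_def power2_eq_square sum_product)
  also have "\<dots> = (\<Sum>x\<in>UNIV. \<Sum>z\<in>UNIV. chi (G x) * chi (G (x + z)))"
  proof (rule sum.cong[OF refl])
    fix x
    show "(\<Sum>y\<in>UNIV. chi (G x) * chi (G y)) = (\<Sum>z\<in>UNIV. chi (G x) * chi (G (x + z)))"
      using sum.reindex_bij_betw[OF bij_plus, of "\<lambda>y. chi (G x) * chi (G y)" x] by simp
  qed
  also have "\<dots> = (\<Sum>z\<in>UNIV. \<Sum>x\<in>UNIV. chi (tr n (a * z)) * chi (g x + g (x + z)))"
    unfolding chi_G by (rule sum.swap)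
  also have "\<dots> = (\<Sum>z\<in>UNIV. chi (tr n (a * z)) * (\<Sum>x\<in>UNIV. chi (g x + g (x + z))))"
    by (simp add: sum_distrib_left)
  also have "\<dots> = (\<Sum>z\<in>UNIV. if z = (0::'a) then 2 ^ n else 0)"
    using balanced card unfolding derivative_def
    by (intro sum.cong refl) (auto simp: chi_def add_self_eq_0[OF char2] tr_zero[OF char2])
  also have "\<dots> = 2 ^ n"
    by simp
  finally have "\<bar>walsh n g a\<bar> = sqrt (2 ^ n)"
    by (metis real_sqrt_abs)
  then show "\<bar>walsh n g a\<bar> = 2 powr (real n / 2)"
    by (simp add: powr_half_sqrt_powr powr_realpow)
qed

lemma not_bent_if_invariant:
  fixes g :: "'a \<Rightarrow> 'a"
  assumes g01: "\<And>x. g x \<in> {0, 1}"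
    and "d \<noteq> 0" and invariant: "\<And>x. g (x + d) = g x"
  shows "\<not> bent n g"
proof
  obtain e :: 'a where e: "tr n e = 1"
    using tr_eq_1_exists by blast
  define a where "a = e / d"
  have "walsh n g a = 0"
    unfolding walsh_def
  proof (rule sum_chi_complemented)
    show "g x + tr n (a * x) \<in> {0, 1}" for x
      by (rule add_in_01[OF char2 g01 tr_in_01])
    show "g (x + d) + tr n (a * (x + d)) = g x + tr n (a * x) + 1" for x
      using \<open>d \<noteq> 0\<close> by (simp add: invariant distrib_left tr_add[OF char2] a_def e add.assoc)
  qed
  moreover assume "bent n g"
  then have "\<bar>walsh n g a\<bar> = 2 powr (real n / 2)"
    by (simp add: bent_iff_walsh)
  ultimately show False
    by simp
qed

end

definition quad_form :: "nat \<Rightarrow> 'a::field \<Rightarrow> 'a \<Rightarrow> 'a" where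
  "quad_form k w x = tr k (w * x ^ (2 ^ k + 1))"

text \<open>In the following context \<open>x ^ 2 ^ k\<close> is the conjugate of \<open>x\<close> over \<open>subfield k\<close> and
  \<open>x ^ (2 ^ k + 1)\<close> its norm.\<close>

context
  fixes k n :: nat
  assumes char2: "(2::'a::{field,finite}) = 0"
    and card: "card (UNIV :: 'a set) = 2 ^ n"
    and n_eq: "n = 2 * k"
begin

lemma conj_conj: "((x::'a) ^ 2 ^ k) ^ 2 ^ k = x"
  using power_card_eq_self[OF char2 card, of x] n_eq by (simp add: mult_2 power_add flip: power_mult)

lemma norm_in_subfield: "(x::'a) ^ (2 ^ k + 1) \<in> subfield k"
  by (simp add: subfield_def power_mult_distrib conj_conj mult.commute)

lemma mult_conj_swap:
  assumes "(x::'a) * y ^ 2 ^ k \<in> subfield k"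
  shows "y * x ^ 2 ^ k = x * y ^ 2 ^ k"
proof -
  have "y * x ^ 2 ^ k = (x * y ^ 2 ^ k) ^ 2 ^ k"
    by (simp add: power_mult_distrib conj_conj mult.commute)
  also have "\<dots> = x * y ^ 2 ^ k"
    using assms by (simp add: subfield_def)
  finally show ?thesis .
qed

text \<open>\<open>x \<mapsto> x ^ 2 ^ k + x\<close> is additive, maps the field into \<open>subfield k\<close> and has kernel
  \<open>subfield k\<close>; so its fibres have at most \<open>card (subfield k)\<close> elements.\<close>
lemma card_subfield_ge: "2 ^ k \<le> card (subfield k :: 'a set)"
proof -
  define K where "K = (subfield k :: 'a set)"
  define L where "L x = x ^ 2 ^ k + x" for x :: 'a
  have L_add: "L (x + y) = L x + L y" for x y
    by (simp add: L_def frobenius_add[OF char2] add_ac)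
  have L_eq_0: "L x = 0 \<longleftrightarrow> x \<in> K" for x
    by (simp add: L_def K_def subfield_def add_eq_0_iff_eq[OF char2])
  have "L \<in> UNIV \<rightarrow> K"
    by (auto simp: L_def K_def subfield_def frobenius_add[OF char2] conj_conj add.commute)
  then obtain y where "card (L -` {y} \<inter> UNIV) * card K \<ge> card (UNIV :: 'a set)"
    using pigeonhole_card[of L UNIV K] zero_in_subfield[where k = k and 'a = 'a] by (auto simp: K_def)
  moreover have "card (L -` {y}) \<le> card K"
  proof (cases "L -` {y} = {}")
    case False
    then obtain x0 where x0: "L x0 = y"
      by blast
    have "L -` {y} \<subseteq> (\<lambda>d. x0 + d) ` K"
    proof
      fix x
      assume "x \<in> L -` {y}"
      then have "L (x0 + x) = 0"
        using x0 by (simp add: L_add add_self_eq_0[OF char2])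
      then have "x0 + x \<in> K"
        using L_eq_0 by blast
      moreover have "x = x0 + (x0 + x)"
        by (simp add: add_add_self[OF char2])
      ultimately show "x \<in> (\<lambda>d. x0 + d) ` K"
        by blast
    qed
    then have "card (L -` {y}) \<le> card ((\<lambda>d. x0 + d) ` K)"
      by (simp add: card_mono)
    also have "\<dots> \<le> card K"
      by (rule card_image_le) simp
    finally show ?thesis .
  qed simp
  ultimately have "card (UNIV :: 'a set) \<le> card K * card K"
    by (metis Int_UNIV_right le_trans mult_le_mono1)
  moreover have "card (UNIV :: 'a set) = 2 ^ k * 2 ^ k"
    unfolding card n_eq mult_2 power_add ..
  ultimately have "2 ^ k * 2 ^ k \<le> card K * card K"
    by simp
  then show ?thesis
    unfolding K_def by (metis power2_eq_square power2_le_imp_le zero_le)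
qed

lemma card_subfield: "card (subfield k :: 'a set) = 2 ^ k"
proof (rule antisym)
  have "0 < k"
    using card_exponent_pos[OF char2 card] n_eq by simp
  then show "card (subfield k :: 'a set) \<le> 2 ^ k"
    by (rule card_subfield_le)
qed (rule card_subfield_ge)

lemma quad_form_in_01: "w \<in> subfield k \<Longrightarrow> quad_form k w (x::'a) \<in> {0, 1}"
  unfolding quad_form_def
  by (intro tr_subfield_in_01[OF char2] subfield_mult norm_in_subfield)

lemma quad_form_add:
  assumes "w \<in> subfield k"
  shows "quad_form k w (x + z :: 'a) = quad_form k w x + quad_form k w z + tr n (w * z ^ 2 ^ k * x)"
proof -
  let ?y = "w * z ^ 2 ^ k * x"
  have "?y ^ 2 ^ k = w ^ 2 ^ k * (z ^ 2 ^ k) ^ 2 ^ k * x ^ 2 ^ k"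
    by (simp add: power_mult_distrib)
  also have "\<dots> = w * x ^ 2 ^ k * z"
    using assms by (simp add: subfield_def conj_conj mult_ac)
  finally have conj_y: "?y ^ 2 ^ k = w * x ^ 2 ^ k * z" .
  have "w * (x + z) ^ (2 ^ k + 1) = w * x ^ (2 ^ k + 1) + w * z ^ (2 ^ k + 1) + (?y + w * x ^ 2 ^ k * z)"
    by (simp add: frobenius_add[OF char2] algebra_simps)
  then have "w * (x + z) ^ (2 ^ k + 1) = w * x ^ (2 ^ k + 1) + w * z ^ (2 ^ k + 1) + (?y + ?y ^ 2 ^ k)"
    unfolding conj_y .
  moreover have "tr k ?y + tr k (?y ^ 2 ^ k) = tr n ?y"
    using n_eq tr_split[OF char2, of k k ?y] by (simp add: mult_2)
  ultimately show ?thesis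
    by (simp add: quad_form_def tr_add[OF char2])
qed

lemma mult_conj_in_subfield_of_less:
  fixes u :: "nat \<Rightarrow> 'a"
  assumes "\<And>i j. i < j \<Longrightarrow> j < m \<Longrightarrow> u i * u j ^ 2 ^ k \<in> subfield k"
    and "i < m" "j < m"
  shows "u i * (u j :: 'a) ^ 2 ^ k \<in> subfield k"
proof (cases i j rule: linorder_cases)
  case less
  then show ?thesis
    using assms by blast
next
  case equal
  then show ?thesis
    using norm_in_subfield[of "u i"] by simp
next
  case greater
  then have "u j * u i ^ 2 ^ k \<in> subfield k"
    using assms by blast
  then show ?thesis
    using mult_conj_swap by metis
qed

lemma nonzero_annihilator_exists:
  assumes u: "\<And>i j. i < m \<Longrightarrow> j < m \<Longrightarrow> u i * u j ^ 2 ^ k \<in> subfield k"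
  obtains d :: 'a where "d \<noteq> 0" and "\<And>j. j < m \<Longrightarrow> tr n (u j * d) = 0"
proof (cases "\<exists>j<m. u j \<noteq> 0")
  case True
  then obtain j where "j < m" "u j \<noteq> 0"
    by blast
  then show ?thesis
    using that[of "u j ^ 2 ^ k"] u tr_double_subfield[OF char2] n_eq by auto
next
  case False
  then show ?thesis
    using that[of 1] by (auto simp: tr_zero[OF char2])
qed

context
  fixes w :: 'a and m :: nat and u :: "nat \<Rightarrow> 'a" and H :: "'a \<Rightarrow> 'a"
  assumes w: "w \<in> subfield k" "w \<noteq> 0"
    and u: "\<And>i j. i < m \<Longrightarrow> j < m \<Longrightarrow> u i * u j ^ 2 ^ k \<in> subfield k"
    and H_shift: "\<And>x s. (\<And>j. j < m \<Longrightarrow> tr n (u j * s) = 0) \<Longrightarrow>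
      H (x + s) = H x + quad_form k w s + tr n (w * s ^ 2 ^ k * x)"
begin

lemma derivative_complemented_if_annihilated:
  assumes "z \<noteq> 0" and z: "\<And>j. j < m \<Longrightarrow> tr n (u j * z) = 0"
  shows "\<exists>c. \<forall>x. derivative H z (x + c) = derivative H z x + 1"
proof -
  have D_eq: "derivative H z x = quad_form k w z + tr n (w * z ^ 2 ^ k * x)" for x
    using H_shift[OF z, of x] by (simp add: derivative_def add.assoc add_add_self[OF char2])
  obtain e :: 'a where e: "tr n e = 1"
    using tr_eq_1_exists[OF char2 card] by blast
  have "w * z ^ 2 ^ k \<noteq> 0"
    using w(2) \<open>z \<noteq> 0\<close> by simp
  then have "derivative H z (x + e / (w * z ^ 2 ^ k)) = derivative H z x + 1" for x
    by (simp add: D_eq distrib_left tr_add[OF char2] e add.assoc)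
  then show ?thesis
    by blast
qed

text \<open>The shift \<open>c = u j ^ 2 ^ k / w\<close> lies in the common kernel of the \<open>tr n (u i * _)\<close> and adds
  \<open>tr n (u j * x)\<close> to \<open>H x\<close>.\<close>
lemma derivative_complemented_if_not_annihilated:
  assumes j: "j < m" "tr n (u j * z) = 1"
  shows "\<exists>c. \<forall>x. derivative H z (x + c) = derivative H z x + 1"
proof -
  define c where "c = inverse w * u j ^ 2 ^ k"
  have c_annihilates: "tr n (u i * c) = 0" if "i < m" for i
  proof -
    have "u i * c = inverse w * (u i * u j ^ 2 ^ k)"
      by (simp add: c_def mult_ac)
    also have "\<dots> \<in> subfield k"
      by (intro subfield_mult subfield_inverse w(1) u that j(1))
    finally show ?thesis
      using tr_double_subfield[OF char2] n_eq by simp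
  qed
  have "w * c ^ 2 ^ k = u j"
    using w subfield_inverse[OF w(1)] conj_conj[of "u j"]
    by (simp add: c_def subfield_def power_mult_distrib)
  then have shift_c: "H (y + c) = H y + quad_form k w c + tr n (u j * y)" for y
    using H_shift[OF c_annihilates] by simp
  have "derivative H z (x + c) = derivative H z x + 1" for x
  proof -
    have "derivative H z (x + c) = H (x + c) + H ((x + z) + c)"
      by (simp add: derivative_def add_ac)
    also have "\<dots> = (H x + quad_form k w c + tr n (u j * x))
        + (H (x + z) + quad_form k w c + (tr n (u j * x) + tr n (u j * z)))"
      by (simp only: shift_c distrib_left tr_add[OF char2])
    also have "\<dots> = derivative H z x + 1"
      unfolding derivative_def j(2) by (simp add: add_ac add_add_self[OF char2] char2)
    finally show ?thesis .
  qed
  then show ?thesis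
    by blast
qed

lemma derivative_complemented:
  assumes "z \<noteq> 0"
  shows "\<exists>c. \<forall>x. derivative H z (x + c) = derivative H z x + 1"
proof (cases "\<forall>j<m. tr n (u j * z) = 0")
  case True
  then show ?thesis
    using derivative_complemented_if_annihilated[OF assms] by blast
next
  case False
  then obtain j where "j < m" "tr n (u j * z) = 1"
    using tr_in_01[OF char2 card] by blast
  then show ?thesis
    by (rule derivative_complemented_if_not_annihilated)
qed

end

lemma bent_quad_form_plus_invariant:
  fixes u :: "nat \<Rightarrow> 'a" and g :: "'a \<Rightarrow> 'a"
  assumes w: "w \<in> subfield k" "w \<noteq> 0"
    and u: "\<And>i j. i < m \<Longrightarrow> j < m \<Longrightarrow> u i * u j ^ 2 ^ k \<in> subfield k"
    and g01: "\<And>x. g x \<in> {0, 1}"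
    and g_inv: "\<And>x d. (\<And>j. j < m \<Longrightarrow> tr n (u j * d) = 0) \<Longrightarrow> g (x + d) = g x"
  shows "bent n (\<lambda>x. quad_form k w x + g x)"
proof (rule bent_if_derivatives_balanced[OF char2 card])
  let ?H = "\<lambda>x. quad_form k w x + g x"
  show H01: "?H x \<in> {0, 1}" for x
    by (rule add_in_01[OF char2 quad_form_in_01[OF w(1)] g01])
  have H_shift: "?H (x + s) = ?H x + quad_form k w s + tr n (w * s ^ 2 ^ k * x)"
    if "\<And>j. j < m \<Longrightarrow> tr n (u j * s) = 0" for x s
    using quad_form_add[OF w(1), of x s] g_inv[OF that, of x] by (simp add: add_ac)
  fix z :: 'a
  assume "z \<noteq> 0"
  then obtain c where c: "\<And>x. derivative ?H z (x + c) = derivative ?H z x + 1"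
    using derivative_complemented[where m = m and u = u, OF w u H_shift] by blast
  have D01: "derivative ?H z x \<in> {0, 1}" for x
    unfolding derivative_def by (rule add_in_01[OF char2 H01 H01])
  show "(\<Sum>x\<in>UNIV. chi (derivative ?H z x)) = 0"
    by (rule sum_chi_complemented[OF char2 card, where g = "derivative ?H z", OF D01 c])
qed

lemma bent_quad_form_plus_invariant_iff:
  fixes u :: "nat \<Rightarrow> 'a" and g :: "'a \<Rightarrow> 'a"
  assumes w: "w \<in> subfield k"
    and u: "\<And>i j. i < m \<Longrightarrow> j < m \<Longrightarrow> u i * u j ^ 2 ^ k \<in> subfield k"
    and g01: "\<And>x. g x \<in> {0, 1}"
    and g_inv: "\<And>x d. (\<And>j. j < m \<Longrightarrow> tr n (u j * d) = 0) \<Longrightarrow> g (x + d) = g x"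
  shows "bent n (\<lambda>x. quad_form k w x + g x) \<longleftrightarrow> w \<noteq> 0"
proof (cases "w = 0")
  case True
  obtain d where d: "d \<noteq> 0" "\<And>j. j < m \<Longrightarrow> tr n (u j * d) = 0"
    using nonzero_annihilator_exists[where m = m and u = u] u by metis
  have "g (x + d) = g x" for x
    using d(2) by (rule g_inv)
  then have "\<not> bent n g"
    by (rule not_bent_if_invariant[OF char2 card g01 d(1)])
  then show ?thesis
    using True by (simp add: quad_form_def tr_zero[OF char2])
next
  case False
  then show ?thesis
    using bent_quad_form_plus_invariant[OF w False u g01 g_inv] by simp
qed

end

theorem corollary6:
  fixes u :: "nat \<Rightarrow> 'a::{field,finite}"
    and k n t :: nat
    and F :: "nat \<Rightarrow> nat set set"
    and f :: "nat \<Rightarrow> 'a \<Rightarrow> 'a"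
    and H :: "'a \<Rightarrow> nat set \<Rightarrow> 'a \<Rightarrow> 'a"
  assumes char2: "(2::'a) = 0"
    and card: "card (UNIV :: 'a set) = 2 ^ n"
    and nk: "n = 2 * k"
    and distinct: "inj_on u {0..<k}"
    and cond: "\<And>i j. i < j \<Longrightarrow> j < k \<Longrightarrow>
                 u i * u j ^ (2 ^ k) \<in> subfield k \<and> u i * u j ^ (2 ^ k) \<noteq> 0"
    and tpos: "0 < t"
    and Fred: "\<And>i. i < t \<Longrightarrow> reduced_poly k (F i)"
    and f_def: "\<And>i x. f i x = (if eval_rpoly (F i) (\<lambda>j. tr n (u j * x) = 1) then 1 else 0)"
    and H_def: "\<And>w V x. H w V x = tr k (w * x ^ (2 ^ k + 1)) + (\<Sum>i\<in>V. f i x)"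
  shows "(\<forall>w V. w \<in> subfield k \<and> V \<subseteq> {0..<t} \<and> (w \<noteq> 0 \<or> V \<noteq> {}) \<longrightarrow>
             (bent n (H w V) \<longleftrightarrow> w \<noteq> 0))
       \<and> card {(w, V). w \<in> subfield k \<and> V \<subseteq> {0..<t} \<and> (w \<noteq> 0 \<or> V \<noteq> {})
                \<and> bent n (H w V)} = 2 ^ (k + t) - 2 ^ t
       \<and> (\<forall>V. V \<subseteq> {0..<t} \<longrightarrow> \<not> bent n (\<lambda>x. \<Sum>i\<in>V. f i x))"
proof -
  have u: "u i * u j ^ 2 ^ k \<in> subfield k" if "i < k" "j < k" for i j
    by (rule mult_conj_in_subfield_of_less[OF char2 card nk _ that]) (simp add: cond)
  define g where "g V x = (\<Sum>i\<in>V. f i x)" for V x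
  have g01: "g V x \<in> {0, 1}" for V x
    unfolding g_def by (rule sum_in_01[OF char2]) (simp add: f_def)
  have f_inv: "f i (x + d) = f i x"
    if "i < t" and "\<And>j. j < k \<Longrightarrow> tr n (u j * d) = 0" for i x d
    using eval_rpoly_tr_shift[OF char2 Fred[OF that(1)] that(2)] by (simp add: f_def)
  have g_inv: "g V (x + d) = g V x"
    if "V \<subseteq> {0..<t}" and "\<And>j. j < k \<Longrightarrow> tr n (u j * d) = 0" for V x d
    unfolding g_def using that f_inv by (intro sum.cong) auto
  have bent_iff: "bent n (H w V) \<longleftrightarrow> w \<noteq> 0" if "w \<in> subfield k" "V \<subseteq> {0..<t}" for w V
  proof -
    have "H w V = (\<lambda>x. quad_form k w x + g V x)"
      by (simp add: fun_eq_iff H_def quad_form_def g_def)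
    then show ?thesis
      using bent_quad_form_plus_invariant_iff[OF char2 card nk that(1) u g01 g_inv[OF that(2)]]
      by simp
  qed
  have "{(w, V). w \<in> subfield k \<and> V \<subseteq> {0..<t} \<and> (w \<noteq> 0 \<or> V \<noteq> {}) \<and> bent n (H w V)}
      = (subfield k - {0}) \<times> Pow {0..<t}"
    using bent_iff by auto
  moreover have "card ((subfield k - {0::'a}) \<times> Pow {0..<t}) = 2 ^ (k + t) - 2 ^ t"
    using card_subfield[OF char2 card nk] zero_in_subfield[where k = k and 'a = 'a]
    by (simp add: card_cartesian_product card_Diff_singleton card_Pow power_add diff_mult_distrib)
  moreover have "(\<lambda>x. \<Sum>i\<in>V. f i x) = H 0 V" for V
    by (simp add: fun_eq_iff H_def tr_zero[OF char2])
  ultimately show ?thesis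
    using bent_iff zero_in_subfield[where k = k and 'a = 'a] by auto
qed

end
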